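(* Let $D=\{z\in\mathbb C^2:\ |z_2|^2+x_1^2+y_1^4<1\}$ with defining function $\rho$, fix $\zeta\in bD$, and use the local coordinates centered at $\zeta$ described in the context, with $\delta>0$ small enough that $\frac{\partial\Delta}{\partial u_2}(w,z)\ne0$ for $w\in bD$, $|w-\zeta|<\delta$, $|z-\zeta|<\delta$. Suppose $f$ is a $C^1$ function on $bD$ supported in $\{w\in bD:|w-\zeta|<\delta\}$. If $z\in D$ and $|z-\zeta|<\delta$, then $$\mathbf C f(z)=\int_{bD}\frac{1}{\Delta(w,z)}\,\frac{\partial}{\partial u_2}\big(f(w)\gamma(w)\big)\,du_1\,dv_1\,du_2,\qquad \gamma(w)=\frac{\Lambda(u_1,v_1,u_2)}{\frac{\partial\Delta}{\partial u_2}(w,z)}.$$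
   Context: $\rho(w)=|w_2|^2+u_1^2+v_1^4-1$, $\Delta(w,z)=\sum_{j=1}^2\frac{\partial\rho}{\partial w_j}(w)(w_j-z_j)$. The Cauchy-Leray integral is $\mathbf C f(z)=\frac{1}{(2\pi i)^2}\int_{bD}f(w)\,\frac{j^*(\partial\rho\wedge\bar\partial\partial\rho)(w)}{\Delta(w,z)^2}$, $z\in D$, with $j^*$ the pullback by $bD\hookrightarrow\mathbb C^2$; equivalently $\mathbf Cf(z)=\int_{bD}\frac{f(w)\Gamma(w)}{\Delta(w,z)^2}d\sigma(w)$, where $d\sigma$ is induced Lebesgue measure and $\Gamma$ is the smooth positive function with $\Gamma\,d\sigma=(2\pi i)^{-2}j^*(\partial\rho\wedge\bar\partial\partial\rho)$. Local coordinates: $w=(u_1+iv_1,u_2+iv_2)$ obtained by a translation and unitary map so that $\zeta=0$, $\partial\rho/\partial v_2(\zeta)=|\nabla\rho(\zeta)|$ and the other first partials of $\rho$ vanish at $\zeta$; near $\zeta$, $bD$ is the graph $v_2=\Phi(u_1,v_1,u_2)$, and $\Lambda$ is defined by $\Gamma(w)\,d\sigma(w)=\Lambda(u_1,v_1,u_2)\,du_1\,dv_1\,du_2$ there. *)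

theory Defs
  imports "HOL-Analysis.Analysis"
begin

type_synonym r3 = "real \<times> real \<times> real"
type_synonym c2 = "complex \<times> complex"

text \<open>Points of C^2 are pairs (w1, w2), w1 = u1 + i v1, w2 = u2 + i v2 (Euclidean norm).\<close>

definition rho :: "c2 \<Rightarrow> real" where
  "rho w = (cmod (snd w))\<^sup>2 + (Re (fst w))\<^sup>2 + (Im (fst w)) ^ 4 - 1"

definition Dom :: "c2 set" where
  "Dom = {z. (cmod (snd z))\<^sup>2 + (Re (fst z))\<^sup>2 + (Im (fst z)) ^ 4 < 1}"

definition dir_deriv :: "('a::real_vector \<Rightarrow> 'b::real_normed_vector) \<Rightarrow> 'a \<Rightarrow> 'a \<Rightarrow> 'b" where
  "dir_deriv g w e = vector_derivative (\<lambda>s::real. g (w + s *\<^sub>R e)) (at 0)"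

definition coord :: "nat \<Rightarrow> c2 \<Rightarrow> complex" where
  "coord j w = (if j = 1 then fst w else snd w)"

definition udir :: "nat \<Rightarrow> c2" where "udir j = (if j = 1 then (1, 0) else (0, 1))"
definition vdir :: "nat \<Rightarrow> c2" where "vdir j = (if j = 1 then (\<i>, 0) else (0, \<i>))"

definition dw :: "(c2 \<Rightarrow> complex) \<Rightarrow> nat \<Rightarrow> c2 \<Rightarrow> complex" where
  "dw g j w = (dir_deriv g w (udir j) - \<i> * dir_deriv g w (vdir j)) / 2"

definition dwbar :: "(c2 \<Rightarrow> complex) \<Rightarrow> nat \<Rightarrow> c2 \<Rightarrow> complex" where
  "dwbar g j w = (dir_deriv g w (udir j) + \<i> * dir_deriv g w (vdir j)) / 2"

definition rhoC :: "c2 \<Rightarrow> complex" where "rhoC w = complex_of_real (rho w)"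

definition Delta :: "c2 \<Rightarrow> c2 \<Rightarrow> complex" where
  "Delta w z = (\<Sum>j\<in>{1,2}. dw rhoC j w * (coord j w - coord j z))"

definition grad_norm :: "c2 \<Rightarrow> real" where
  "grad_norm w = sqrt ((\<Sum>j\<in>{1,2}. (dir_deriv rho w (udir j))\<^sup>2 + (dir_deriv rho w (vdir j))\<^sup>2))"

text \<open>A unitary 2x2 matrix U = [[a,b],[c,d]] (U^* U = I).  Local coordinates
  w' = U (w - zeta); the inverse map is w = zeta + U^* w'.\<close>
definition unitary2 :: "complex \<Rightarrow> complex \<Rightarrow> complex \<Rightarrow> complex \<Rightarrow> bool" where
  "unitary2 a b c d \<longleftrightarrow> (cmod a)\<^sup>2 + (cmod c)\<^sup>2 = 1 \<and> (cmod b)\<^sup>2 + (cmod d)\<^sup>2 = 1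
     \<and> cnj a * b + cnj c * d = 0"

definition loc_inv :: "c2 \<Rightarrow> complex \<Rightarrow> complex \<Rightarrow> complex \<Rightarrow> complex \<Rightarrow> c2 \<Rightarrow> c2" where
  "loc_inv \<zeta> a b c d w' =
     (fst \<zeta> + cnj a * fst w' + cnj c * snd w', snd \<zeta> + cnj b * fst w' + cnj d * snd w')"

text \<open>Parametrisation of bD near zeta by (u1,v1,u2): the point with local coordinates
  (u1 + i v1, u2 + i Phi(u1,v1,u2)), expressed in the original coordinates of C^2.\<close>
definition psi :: "c2 \<Rightarrow> complex \<Rightarrow> complex \<Rightarrow> complex \<Rightarrow> complex \<Rightarrow> (r3 \<Rightarrow> real) \<Rightarrow> r3 \<Rightarrow> c2" where
  "psi \<zeta> a b c d \<Phi> t = (case t of (u1, v1, u2) \<Rightarrow>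
     loc_inv \<zeta> a b c d (Complex u1 v1, Complex u2 (\<Phi> t)))"

definition tdir :: "nat \<Rightarrow> r3" where
  "tdir m = (if m = 1 then (1, 0, 0) else if m = 2 then (0, 1, 0) else (0, 0, 1))"

fun pd_iter :: "nat list \<Rightarrow> (r3 \<Rightarrow> 'b::real_normed_vector) \<Rightarrow> r3 \<Rightarrow> 'b" where
  "pd_iter [] g = g"
| "pd_iter (m # ms) g = (\<lambda>t. dir_deriv (pd_iter ms g) t (tdir m))"

definition Ck_on :: "nat \<Rightarrow> r3 set \<Rightarrow> (r3 \<Rightarrow> 'b::real_normed_vector) \<Rightarrow> bool" where
  "Ck_on k V g \<longleftrightarrow> (\<forall>ms. length ms \<le> k \<longrightarrow> set ms \<subseteq> {1,2,3} \<longrightarrow>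
      continuous_on V (pd_iter ms g) \<and>
      (length ms < k \<longrightarrow> (\<forall>m\<in>{1,2,3}. \<forall>t\<in>V.
         ((\<lambda>s. pd_iter ms g (t + s *\<^sub>R tdir m)) has_vector_derivative pd_iter (m # ms) g t) (at 0))))"

definition smooth_on :: "r3 set \<Rightarrow> (r3 \<Rightarrow> 'b::real_normed_vector) \<Rightarrow> bool" where
  "smooth_on V g \<longleftrightarrow> (\<forall>k. Ck_on k V g)"

definition det3 :: "(nat \<Rightarrow> complex) \<Rightarrow> (nat \<Rightarrow> complex) \<Rightarrow> (nat \<Rightarrow> complex) \<Rightarrow> complex" where
  "det3 r s q = r 1 * (s 2 * q 3 - s 3 * q 2) - r 2 * (s 1 * q 3 - s 3 * q 1)
               + r 3 * (s 1 * q 2 - s 2 * q 1)"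

definition dpsi :: "(r3 \<Rightarrow> c2) \<Rightarrow> nat \<Rightarrow> nat \<Rightarrow> r3 \<Rightarrow> complex" where
  "dpsi p j m t = dir_deriv (\<lambda>t. coord j (p t)) t (tdir m)"

text \<open>d rho /\ dbar d rho = sum_{i,j,k} rho_i rho_{j kbar} dw_i /\ dwbar_k /\ dw_j, and its
  pullback by the parametrisation p is  form_coeff p t  du1 /\ dv1 /\ du2.\<close>
definition form_coeff :: "(r3 \<Rightarrow> c2) \<Rightarrow> r3 \<Rightarrow> complex" where
  "form_coeff p t = (\<Sum>i\<in>{1,2}. \<Sum>j\<in>{1,2}. \<Sum>k\<in>{1,2}.
      dw rhoC i (p t) * dwbar (dw rhoC j) k (p t) *
      det3 (\<lambda>m. dpsi p i m t) (\<lambda>m. cnj (dpsi p k m t)) (\<lambda>m. dpsi p j m t))"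

text \<open>Gamma dsigma = (2 pi i)^(-2) j^*(d rho /\ dbar d rho) is a positive measure on bD, so in
  the chart Gamma dsigma = Lambda du1 dv1 du2 with Lambda the absolute value of the
  coefficient of the pulled-back form.\<close>
definition Lam :: "(r3 \<Rightarrow> c2) \<Rightarrow> r3 \<Rightarrow> real" where
  "Lam p t = cmod (form_coeff p t / (2 * pi * \<i>)\<^sup>2)"

definition dDelta_du2 :: "(r3 \<Rightarrow> c2) \<Rightarrow> r3 \<Rightarrow> c2 \<Rightarrow> complex" where
  "dDelta_du2 p t z = dir_deriv (\<lambda>t. Delta (p t) z) t (tdir 3)"

text \<open>Cauchy--Leray integral of f supported in the chart p(V):
  C f(z) = int_{bD} f Gamma / Delta^2 dsigma = int_V f(p t) Lambda(t) / Delta(p t, z)^2 dt\<close>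
definition cauchy_leray_chart :: "(r3 \<Rightarrow> c2) \<Rightarrow> r3 set \<Rightarrow> (c2 \<Rightarrow> complex) \<Rightarrow> c2 \<Rightarrow> complex" where
  "cauchy_leray_chart p V f z =
     integral V (\<lambda>t. f (p t) * complex_of_real (Lam p t) / (Delta (p t) z)\<^sup>2)"

end

theory Submission
  imports Defs
begin

text \<open>Put \<open>G = f \<Lambda> / (\<partial>\<Delta>/\<partial>u\<^sub>2)\<close>; then \<open>G/\<Delta>\<close> has
  compact support in the chart and \<open>\<partial>(G/\<Delta>)/\<partial>u\<^sub>2 = (\<partial>G/\<partial>u\<^sub>2)/\<Delta> - f\<Lambda>/\<Delta>\<^sup>2\<close>, so integrating
  first in \<open>u\<^sub>2\<close> (Fubini) gives the formula. Two facts make this work. First, \<open>\<Delta>(w, z) \<noteq> 0\<close>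
  for \<open>w \<in> bD\<close>, \<open>z \<in> D\<close>, because \<open>2 Re \<Delta>(w, z)\<close> is a sum of squares plus \<open>-\<rho>(z)\<close>. Second,
  \<open>\<Lambda>\<close> is differentiable although it is an absolute value: the coefficient \<open>form_coeff\<close> of the
  pulled-back form equals \<open>-2 Im \<gamma> \<cdot> B\<close>, where \<open>B > 0\<close> is the (positive definite)
  Levi form on a nonzero complex tangent vector and \<open>Im \<gamma> \<noteq> 0\<close> because \<open>\<partial>\<rho> \<noteq> 0\<close> on \<open>bD\<close>.\<close>

section \<open>Directional derivatives\<close>

definition has_dir_deriv ::
    "('a::real_normed_vector \<Rightarrow> 'b::real_normed_vector) \<Rightarrow> 'b \<Rightarrow> 'a \<Rightarrow> 'a \<Rightarrow> bool" where
  "has_dir_deriv g D t e \<longleftrightarrow> ((\<lambda>s. g (t + s *\<^sub>R e)) has_vector_derivative D) (at 0)"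

lemma dir_deriv_eqI: "has_dir_deriv g D t e \<Longrightarrow> dir_deriv g t e = D"
  unfolding has_dir_deriv_def dir_deriv_def by (rule vector_derivative_at)

lemma has_dir_deriv_unique: "has_dir_deriv g D1 t e \<Longrightarrow> has_dir_deriv g D2 t e \<Longrightarrow> D1 = D2"
  unfolding has_dir_deriv_def by (rule vector_derivative_unique_at)

lemma has_dir_deriv_const: "has_dir_deriv (\<lambda>_. k) 0 t e"
  by (simp add: has_dir_deriv_def)

lemma has_dir_deriv_linear: "bounded_linear L \<Longrightarrow> has_dir_deriv L (L e) t e"
  unfolding has_dir_deriv_def
  by (auto simp: linear_simps intro!: derivative_eq_intros)

lemma has_dir_deriv_add:
  "has_dir_deriv f Df t e \<Longrightarrow> has_dir_deriv g Dg t e \<Longrightarrow> has_dir_deriv (\<lambda>x. f x + g x) (Df + Dg) t e"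
  unfolding has_dir_deriv_def by (rule has_vector_derivative_add)

lemma has_dir_deriv_diff:
  "has_dir_deriv f Df t e \<Longrightarrow> has_dir_deriv g Dg t e \<Longrightarrow> has_dir_deriv (\<lambda>x. f x - g x) (Df - Dg) t e"
  unfolding has_dir_deriv_def by (rule has_vector_derivative_diff)

lemma has_dir_deriv_mult:
  fixes f g :: "'a::real_normed_vector \<Rightarrow> 'b::real_normed_algebra"
  shows "has_dir_deriv f Df t e \<Longrightarrow> has_dir_deriv g Dg t e \<Longrightarrow>
    has_dir_deriv (\<lambda>x. f x * g x) (f t * Dg + Df * g t) t e"
  unfolding has_dir_deriv_def
  using has_vector_derivative_mult[of "\<lambda>s. f (t + s *\<^sub>R e)" Df 0 UNIV "\<lambda>s. g (t + s *\<^sub>R e)" Dg]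
  by simp

lemma has_dir_deriv_mult_left:
  "has_dir_deriv g D t e \<Longrightarrow> has_dir_deriv (\<lambda>x. (k::'b::real_normed_algebra) * g x) (k * D) t e"
  unfolding has_dir_deriv_def by (rule has_vector_derivative_mult_right)

lemma has_dir_deriv_of_real:
  "has_dir_deriv (f :: 'a::real_normed_vector \<Rightarrow> real) D t e \<Longrightarrow>
    has_dir_deriv (\<lambda>x. complex_of_real (f x)) (of_real D) t e"
  unfolding has_dir_deriv_def
  by (rule has_vector_derivative_of_real) (simp add: has_real_derivative_iff_has_vector_derivative)

lemma has_dir_deriv_cnj: "has_dir_deriv f D t e \<Longrightarrow> has_dir_deriv (\<lambda>x. cnj (f x)) (cnj D) t e"
  unfolding has_dir_deriv_def by (rule has_vector_derivative_cnj)

lemma has_dir_deriv_Re: "has_dir_deriv f D t e \<Longrightarrow> has_dir_deriv (\<lambda>x. Re (f x)) (Re D) t e"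
  unfolding has_dir_deriv_def by (rule bounded_linear.has_vector_derivative[OF bounded_linear_Re])

lemma has_dir_deriv_Im: "has_dir_deriv f D t e \<Longrightarrow> has_dir_deriv (\<lambda>x. Im (f x)) (Im D) t e"
  unfolding has_dir_deriv_def by (rule bounded_linear.has_vector_derivative[OF bounded_linear_Im])

lemma has_dir_deriv_Complex:
  "has_dir_deriv x Dx t e \<Longrightarrow> has_dir_deriv y Dy t e \<Longrightarrow>
    has_dir_deriv (\<lambda>t. Complex (x t) (y t)) (Complex Dx Dy) t e"
  unfolding has_dir_deriv_def has_vector_derivative_complex_iff
    has_real_derivative_iff_has_vector_derivative
  by simp

lemma has_dir_deriv_chain:
  fixes g :: "'a::real_normed_vector \<Rightarrow> 'b::real_normed_field"
  assumes "has_dir_deriv g D t e" "(F has_field_derivative F') (at (g t))"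
  shows "has_dir_deriv (\<lambda>x. F (g x)) (D * F') t e"
  using field_vector_diff_chain_at[of "\<lambda>s. g (t + s *\<^sub>R e)" D 0 F F'] assms
  unfolding has_dir_deriv_def by (simp add: o_def)

lemma has_dir_deriv_power:
  fixes g :: "'a::real_normed_vector \<Rightarrow> 'b::real_normed_field"
  shows "has_dir_deriv g D t e \<Longrightarrow> has_dir_deriv (\<lambda>x. g x ^ n) (D * (of_nat n * g t ^ (n - 1))) t e"
  by (rule has_dir_deriv_chain) (auto intro!: derivative_eq_intros)

lemma has_dir_deriv_inverse:
  fixes g :: "'a::real_normed_vector \<Rightarrow> 'b::real_normed_field"
  assumes "has_dir_deriv g D t e" "g t \<noteq> 0"
  shows "has_dir_deriv (\<lambda>x. inverse (g x)) (D * (- (inverse (g t) ^ 2))) t e"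
  by (rule has_dir_deriv_chain[OF assms(1)])
    (use DERIV_inverse[OF assms(2), of UNIV] in \<open>simp add: eval_nat_numeral\<close>)

lemma has_dir_deriv_norm:
  fixes g :: "'a::real_normed_vector \<Rightarrow> 'b::real_inner"
  assumes "has_dir_deriv g D t e" "g t \<noteq> 0"
  shows "has_dir_deriv (\<lambda>x. norm (g x)) (inner D (sgn (g t))) t e"
proof -
  have "((\<lambda>s. g (t + s *\<^sub>R e)) has_derivative (\<lambda>h. h *\<^sub>R D)) (at 0)"
    using assms(1) unfolding has_dir_deriv_def has_vector_derivative_def .
  moreover have "(norm has_derivative (\<lambda>h. inner h (sgn (g (t + 0 *\<^sub>R e))))) (at (g (t + 0 *\<^sub>R e)))"
    using has_derivative_norm[of "g t"] assms(2) by (simp add: gderiv_def)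
  ultimately have "((norm \<circ> (\<lambda>s. g (t + s *\<^sub>R e))) has_derivative
      ((\<lambda>h. inner h (sgn (g (t + 0 *\<^sub>R e)))) \<circ> (\<lambda>h. h *\<^sub>R D))) (at 0)"
    by (rule diff_chain_at)
  then show ?thesis
    unfolding has_dir_deriv_def has_vector_derivative_def by (simp add: o_def inner_scaleR_left)
qed

lemma has_dir_deriv_transform_open:
  assumes "open U" "t \<in> U" "\<And>x. x \<in> U \<Longrightarrow> f x = g x" "has_dir_deriv f D t e"
  shows "has_dir_deriv g D t e"
proof -
  have "open {s::real. t + s *\<^sub>R e \<in> U}"
    using open_vimage[OF assms(1), of "\<lambda>s::real. t + s *\<^sub>R e"]
    by (simp add: vimage_def continuous_intros)
  with assms show ?thesis
    unfolding has_dir_deriv_def by (auto intro: has_vector_derivative_transform_within_open)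
qed

definition has_continuous_dir_deriv ::
    "'a::real_normed_vector \<Rightarrow> 'a set \<Rightarrow> ('a \<Rightarrow> 'b::real_normed_vector) \<Rightarrow> ('a \<Rightarrow> 'b) \<Rightarrow> bool" where
  "has_continuous_dir_deriv e U g g' \<longleftrightarrow>
     continuous_on U g \<and> continuous_on U g' \<and> (\<forall>t\<in>U. has_dir_deriv g (g' t) t e)"

definition dir_C1_on :: "'a::real_normed_vector \<Rightarrow> 'a set \<Rightarrow> ('a \<Rightarrow> 'b::real_normed_vector) \<Rightarrow> bool" where
  "dir_C1_on e U g \<longleftrightarrow> (\<exists>g'. has_continuous_dir_deriv e U g g')"

definition dir_C2_on :: "'a::real_normed_vector \<Rightarrow> 'a set \<Rightarrow> ('a \<Rightarrow> 'b::real_normed_vector) \<Rightarrow> bool" where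
  "dir_C2_on e U g \<longleftrightarrow> (\<exists>g'. has_continuous_dir_deriv e U g g' \<and> dir_C1_on e U g')"

lemma has_continuous_dir_deriv_const: "has_continuous_dir_deriv e U (\<lambda>_. k) (\<lambda>_. 0)"
  by (simp add: has_continuous_dir_deriv_def has_dir_deriv_const)

lemma has_continuous_dir_deriv_linear:
  "bounded_linear L \<Longrightarrow> has_continuous_dir_deriv e U L (\<lambda>_. L e)"
  by (simp add: has_continuous_dir_deriv_def has_dir_deriv_linear linear_continuous_on)

lemma has_continuous_dir_deriv_add:
  "has_continuous_dir_deriv e U f f' \<Longrightarrow> has_continuous_dir_deriv e U g g' \<Longrightarrow>
    has_continuous_dir_deriv e U (\<lambda>x. f x + g x) (\<lambda>x. f' x + g' x)"
  by (auto simp: has_continuous_dir_deriv_def intro!: continuous_intros has_dir_deriv_add)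

lemma has_continuous_dir_deriv_diff:
  "has_continuous_dir_deriv e U f f' \<Longrightarrow> has_continuous_dir_deriv e U g g' \<Longrightarrow>
    has_continuous_dir_deriv e U (\<lambda>x. f x - g x) (\<lambda>x. f' x - g' x)"
  by (auto simp: has_continuous_dir_deriv_def intro!: continuous_intros has_dir_deriv_diff)

lemma has_continuous_dir_deriv_mult:
  fixes f g :: "'a::real_normed_vector \<Rightarrow> 'b::real_normed_algebra"
  shows "has_continuous_dir_deriv e U f f' \<Longrightarrow> has_continuous_dir_deriv e U g g' \<Longrightarrow>
    has_continuous_dir_deriv e U (\<lambda>x. f x * g x) (\<lambda>x. f x * g' x + f' x * g x)"
  by (auto simp: has_continuous_dir_deriv_def intro!: continuous_intros has_dir_deriv_mult)

lemma has_continuous_dir_deriv_of_real: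
  "has_continuous_dir_deriv e U (f :: 'a::real_normed_vector \<Rightarrow> real) f' \<Longrightarrow>
    has_continuous_dir_deriv e U (\<lambda>x. complex_of_real (f x)) (\<lambda>x. of_real (f' x))"
  by (auto simp: has_continuous_dir_deriv_def intro!: continuous_intros has_dir_deriv_of_real)

lemma has_continuous_dir_deriv_cnj:
  "has_continuous_dir_deriv e U f f' \<Longrightarrow>
    has_continuous_dir_deriv e U (\<lambda>x. cnj (f x)) (\<lambda>x. cnj (f' x))"
  by (auto simp: has_continuous_dir_deriv_def intro!: continuous_intros has_dir_deriv_cnj)

lemma has_continuous_dir_deriv_Re:
  "has_continuous_dir_deriv e U f f' \<Longrightarrow>
    has_continuous_dir_deriv e U (\<lambda>x. Re (f x)) (\<lambda>x. Re (f' x))"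
  by (auto simp: has_continuous_dir_deriv_def intro!: continuous_intros has_dir_deriv_Re)

lemma has_continuous_dir_deriv_Im:
  "has_continuous_dir_deriv e U f f' \<Longrightarrow>
    has_continuous_dir_deriv e U (\<lambda>x. Im (f x)) (\<lambda>x. Im (f' x))"
  by (auto simp: has_continuous_dir_deriv_def intro!: continuous_intros has_dir_deriv_Im)

lemma has_continuous_dir_deriv_Complex:
  "has_continuous_dir_deriv e U x x' \<Longrightarrow> has_continuous_dir_deriv e U y y' \<Longrightarrow>
    has_continuous_dir_deriv e U (\<lambda>t. Complex (x t) (y t)) (\<lambda>t. Complex (x' t) (y' t))"
  by (auto simp: has_continuous_dir_deriv_def intro!: has_dir_deriv_Complex continuous_on_Complex)

lemma has_continuous_dir_deriv_norm:
  fixes f :: "'a::real_normed_vector \<Rightarrow> 'b::real_inner"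
  shows "has_continuous_dir_deriv e U f f' \<Longrightarrow> (\<And>x. x \<in> U \<Longrightarrow> f x \<noteq> 0) \<Longrightarrow>
    has_continuous_dir_deriv e U (\<lambda>x. norm (f x)) (\<lambda>x. inner (f' x) (sgn (f x)))"
  by (auto simp: has_continuous_dir_deriv_def intro!: continuous_intros has_dir_deriv_norm)

lemma has_continuous_dir_deriv_inverse:
  fixes f :: "'a::real_normed_vector \<Rightarrow> 'b::real_normed_field"
  shows "has_continuous_dir_deriv e U f f' \<Longrightarrow> (\<And>x. x \<in> U \<Longrightarrow> f x \<noteq> 0) \<Longrightarrow>
    has_continuous_dir_deriv e U (\<lambda>x. inverse (f x)) (\<lambda>x. f' x * (- (inverse (f x) ^ 2)))"
  unfolding has_continuous_dir_deriv_def
  by (intro conjI ballI continuous_intros has_dir_deriv_inverse; simp)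

lemma has_continuous_dir_deriv_transform_open:
  assumes "open U" "\<And>x. x \<in> U \<Longrightarrow> f x = g x" "has_continuous_dir_deriv e U f f'"
  shows "has_continuous_dir_deriv e U g f'"
  using assms has_dir_deriv_transform_open[OF assms(1) _ assms(2)] continuous_on_cong[of U U f g]
  unfolding has_continuous_dir_deriv_def by auto

lemma has_continuous_dir_deriv_subset:
  "has_continuous_dir_deriv e U f f' \<Longrightarrow> U' \<subseteq> U \<Longrightarrow> has_continuous_dir_deriv e U' f f'"
  unfolding has_continuous_dir_deriv_def by (auto intro: continuous_on_subset)

lemma has_dir_deriv_bounded_linear:
  "bounded_linear L \<Longrightarrow> has_dir_deriv g D t e \<Longrightarrow> has_dir_deriv (\<lambda>x. L (g x)) (L D) t e"
  unfolding has_dir_deriv_def by (rule bounded_linear.has_vector_derivative)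

lemma has_dir_deriv_Pair:
  "has_dir_deriv f Df t e \<Longrightarrow> has_dir_deriv g Dg t e \<Longrightarrow> has_dir_deriv (\<lambda>x. (f x, g x)) (Df, Dg) t e"
  unfolding has_dir_deriv_def by (rule has_vector_derivative_Pair)

lemma dir_C1_onI: "has_continuous_dir_deriv e U g g' \<Longrightarrow> dir_C1_on e U g"
  by (auto simp: dir_C1_on_def)

lemma dir_C1_on_imp_continuous_on: "dir_C1_on e U g \<Longrightarrow> continuous_on U g"
  by (auto simp: dir_C1_on_def has_continuous_dir_deriv_def)

lemma dir_C1_on_dir_deriv:
  assumes "dir_C1_on e U g"
  shows "has_continuous_dir_deriv e U g (\<lambda>t. dir_deriv g t e)"
proof -
  obtain g' where g': "has_continuous_dir_deriv e U g g'"
    using assms by (auto simp: dir_C1_on_def)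
  then have "\<And>t. t \<in> U \<Longrightarrow> dir_deriv g t e = g' t"
    by (auto simp: has_continuous_dir_deriv_def dir_deriv_eqI)
  with g' show ?thesis
    unfolding has_continuous_dir_deriv_def by (auto cong: continuous_on_cong)
qed

lemma dir_C1_on_const: "dir_C1_on e U (\<lambda>_. k)"
  by (rule dir_C1_onI[OF has_continuous_dir_deriv_const])

lemma dir_C1_on_add: "dir_C1_on e U f \<Longrightarrow> dir_C1_on e U g \<Longrightarrow> dir_C1_on e U (\<lambda>x. f x + g x)"
  unfolding dir_C1_on_def using has_continuous_dir_deriv_add by blast

lemma dir_C1_on_diff: "dir_C1_on e U f \<Longrightarrow> dir_C1_on e U g \<Longrightarrow> dir_C1_on e U (\<lambda>x. f x - g x)"
  unfolding dir_C1_on_def using has_continuous_dir_deriv_diff by blast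

lemma dir_C1_on_mult:
  "dir_C1_on e U f \<Longrightarrow> dir_C1_on e U g \<Longrightarrow> dir_C1_on e U (\<lambda>x. (f x :: 'b::real_normed_algebra) * g x)"
  unfolding dir_C1_on_def using has_continuous_dir_deriv_mult by blast

lemma dir_C1_on_of_real:
  "dir_C1_on e U (f :: 'a::real_normed_vector \<Rightarrow> real) \<Longrightarrow> dir_C1_on e U (\<lambda>x. complex_of_real (f x))"
  unfolding dir_C1_on_def using has_continuous_dir_deriv_of_real by blast

lemma dir_C1_on_cnj: "dir_C1_on e U f \<Longrightarrow> dir_C1_on e U (\<lambda>x. cnj (f x))"
  unfolding dir_C1_on_def using has_continuous_dir_deriv_cnj by blast

lemma dir_C1_on_Re: "dir_C1_on e U f \<Longrightarrow> dir_C1_on e U (\<lambda>x. Re (f x))"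
  unfolding dir_C1_on_def using has_continuous_dir_deriv_Re by blast

lemma dir_C1_on_Im: "dir_C1_on e U f \<Longrightarrow> dir_C1_on e U (\<lambda>x. Im (f x))"
  unfolding dir_C1_on_def using has_continuous_dir_deriv_Im by blast

lemma dir_C1_on_Complex:
  "dir_C1_on e U x \<Longrightarrow> dir_C1_on e U y \<Longrightarrow> dir_C1_on e U (\<lambda>t. Complex (x t) (y t))"
  unfolding dir_C1_on_def using has_continuous_dir_deriv_Complex by blast

lemma dir_C1_on_norm:
  "dir_C1_on e U (f :: 'a::real_normed_vector \<Rightarrow> 'b::real_inner) \<Longrightarrow> (\<And>x. x \<in> U \<Longrightarrow> f x \<noteq> 0) \<Longrightarrow>
    dir_C1_on e U (\<lambda>x. norm (f x))"
  unfolding dir_C1_on_def using has_continuous_dir_deriv_norm by blast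

lemma dir_C1_on_inverse:
  "dir_C1_on e U (f :: 'a::real_normed_vector \<Rightarrow> 'b::real_normed_field) \<Longrightarrow>
    (\<And>x. x \<in> U \<Longrightarrow> f x \<noteq> 0) \<Longrightarrow> dir_C1_on e U (\<lambda>x. inverse (f x))"
  unfolding dir_C1_on_def using has_continuous_dir_deriv_inverse by blast

lemma dir_C1_on_divide:
  "dir_C1_on e U (f :: 'a::real_normed_vector \<Rightarrow> 'b::real_normed_field) \<Longrightarrow> dir_C1_on e U g \<Longrightarrow>
    (\<And>x. x \<in> U \<Longrightarrow> g x \<noteq> 0) \<Longrightarrow> dir_C1_on e U (\<lambda>x. f x / g x)"
  unfolding divide_inverse by (intro dir_C1_on_mult dir_C1_on_inverse)

lemma dir_C1_on_power:
  "dir_C1_on e U (f :: 'a::real_normed_vector \<Rightarrow> 'b::real_normed_algebra_1) \<Longrightarrow>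
    dir_C1_on e U (\<lambda>x. f x ^ n)"
  by (induction n) (simp_all add: dir_C1_on_const dir_C1_on_mult)

lemma dir_C1_on_transform_open:
  "open U \<Longrightarrow> (\<And>x. x \<in> U \<Longrightarrow> f x = g x) \<Longrightarrow> dir_C1_on e U f \<Longrightarrow> dir_C1_on e U g"
  unfolding dir_C1_on_def using has_continuous_dir_deriv_transform_open by blast

lemma dir_C1_on_subset: "dir_C1_on e U f \<Longrightarrow> U' \<subseteq> U \<Longrightarrow> dir_C1_on e U' f"
  unfolding dir_C1_on_def using has_continuous_dir_deriv_subset by blast

lemma dir_C2_on_imp_dir_C1_on: "dir_C2_on e U g \<Longrightarrow> dir_C1_on e U g"
  by (auto simp: dir_C2_on_def dir_C1_on_def)

lemma dir_C2_on_const: "dir_C2_on e U (\<lambda>_. k)"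
  unfolding dir_C2_on_def using has_continuous_dir_deriv_const dir_C1_on_const by blast

lemma dir_C2_on_linear: "bounded_linear L \<Longrightarrow> dir_C2_on e U L"
  unfolding dir_C2_on_def using has_continuous_dir_deriv_linear dir_C1_on_const by blast

lemma dir_C2_on_add: "dir_C2_on e U f \<Longrightarrow> dir_C2_on e U g \<Longrightarrow> dir_C2_on e U (\<lambda>x. f x + g x)"
  unfolding dir_C2_on_def using has_continuous_dir_deriv_add dir_C1_on_add by blast

lemma dir_C2_on_diff: "dir_C2_on e U f \<Longrightarrow> dir_C2_on e U g \<Longrightarrow> dir_C2_on e U (\<lambda>x. f x - g x)"
  unfolding dir_C2_on_def using has_continuous_dir_deriv_diff dir_C1_on_diff by blast

lemma dir_C2_on_mult:
  fixes f g :: "'a::real_normed_vector \<Rightarrow> 'b::real_normed_algebra"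
  assumes "dir_C2_on e U f" "dir_C2_on e U g"
  shows "dir_C2_on e U (\<lambda>x. f x * g x)"
proof -
  obtain f' g' where "has_continuous_dir_deriv e U f f'" "dir_C1_on e U f'"
    "has_continuous_dir_deriv e U g g'" "dir_C1_on e U g'"
    using assms unfolding dir_C2_on_def by blast
  moreover from calculation have "dir_C1_on e U (\<lambda>x. f x * g' x + f' x * g x)"
    by (intro dir_C1_on_add dir_C1_on_mult) (auto intro: dir_C1_onI)
  ultimately show ?thesis
    unfolding dir_C2_on_def using has_continuous_dir_deriv_mult by blast
qed

lemma dir_C2_on_cnj: "dir_C2_on e U f \<Longrightarrow> dir_C2_on e U (\<lambda>x. cnj (f x))"
  unfolding dir_C2_on_def using has_continuous_dir_deriv_cnj dir_C1_on_cnj by blast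

lemma dir_C2_on_Re: "dir_C2_on e U f \<Longrightarrow> dir_C2_on e U (\<lambda>x. Re (f x))"
  unfolding dir_C2_on_def using has_continuous_dir_deriv_Re dir_C1_on_Re by blast

lemma dir_C2_on_Im: "dir_C2_on e U f \<Longrightarrow> dir_C2_on e U (\<lambda>x. Im (f x))"
  unfolding dir_C2_on_def using has_continuous_dir_deriv_Im dir_C1_on_Im by blast

lemma dir_C2_on_Complex:
  "dir_C2_on e U x \<Longrightarrow> dir_C2_on e U y \<Longrightarrow> dir_C2_on e U (\<lambda>t. Complex (x t) (y t))"
  unfolding dir_C2_on_def using has_continuous_dir_deriv_Complex dir_C1_on_Complex by blast

lemma dir_C2_on_power:
  "dir_C2_on e U (f :: 'a::real_normed_vector \<Rightarrow> 'b::real_normed_algebra_1) \<Longrightarrow>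
    dir_C2_on e U (\<lambda>x. f x ^ n)"
  by (induction n) (simp_all add: dir_C2_on_const dir_C2_on_mult)

lemma dir_C2_on_imp_dir_C1_on_dir_deriv:
  assumes "dir_C2_on e U g" "open U"
  shows "dir_C1_on e U (\<lambda>t. dir_deriv g t e)"
proof -
  obtain g' where g': "has_continuous_dir_deriv e U g g'" "dir_C1_on e U g'"
    using assms(1) by (auto simp: dir_C2_on_def)
  then have "\<And>t. t \<in> U \<Longrightarrow> g' t = dir_deriv g t e"
    by (auto simp: has_continuous_dir_deriv_def dir_deriv_eqI)
  then show ?thesis using g'(2) by (rule dir_C1_on_transform_open[OF assms(2)])
qed

lemma Ck_on_1_imp_dir_C1_on:
  assumes "Ck_on 1 V g" "m \<in> {1,2,3}"
  shows "dir_C1_on (tdir m) V g"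
  using assms(1)[unfolded Ck_on_def, rule_format, of "[]"] assms(1)[unfolded Ck_on_def, rule_format, of "[m]"]
    assms(2)
  by (auto simp: dir_C1_on_def has_continuous_dir_deriv_def has_dir_deriv_def)

section \<open>Integration by parts along the third coordinate\<close>

lemma continuous_on_vanishing_outside_closed:
  assumes "open U" "K \<subseteq> U" "closed K" "continuous_on U g" "\<And>t. t \<notin> K \<Longrightarrow> g t = 0"
  shows "continuous_on UNIV g"
proof -
  have "continuous_on (- K) g"
    by (rule continuous_on_eq[of _ "\<lambda>_. 0"]) (use assms(5) in auto)
  then have "continuous_on (U \<union> - K) g"
    using continuous_on_open_Un[OF assms(1) _ assms(4)] assms(3) by (simp add: open_Compl)
  moreover have "U \<union> - K = UNIV" using assms(2) by blast
  ultimately show ?thesis by simp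
qed

lemma has_vector_derivative_u3:
  assumes "has_dir_deriv g D (x, y, s) (tdir 3)"
  shows "((\<lambda>u. g (x, y, u)) has_vector_derivative D) (at s)"
proof -
  have "((\<lambda>r. g ((x, y, s) + r *\<^sub>R tdir 3)) \<circ> (\<lambda>u. u - s) has_vector_derivative 1 *\<^sub>R D) (at s)"
    by (rule vector_diff_chain_at) (use assms in \<open>auto simp: has_dir_deriv_def intro!: derivative_eq_intros\<close>)
  moreover have "(\<lambda>r. g ((x, y, s) + r *\<^sub>R tdir 3)) \<circ> (\<lambda>u. u - s) = (\<lambda>u. g (x, y, u))"
    by (simp add: tdir_def fun_eq_iff)
  ultimately show ?thesis by simp
qed

lemma integral_cbox_r3_iterated:
  fixes F :: "r3 \<Rightarrow> complex"
  assumes "continuous_on UNIV F"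
  shows "integral (cbox (a1, a2, a3) (b1, b2, b3)) F =
    integral {a1..b1} (\<lambda>x. integral {a2..b2} (\<lambda>y. integral {a3..b3} (\<lambda>u. F (x, y, u))))"
proof -
  have "integral (cbox (a1, a2, a3) (b1, b2, b3)) F =
      integral (cbox a1 b1) (\<lambda>x. integral (cbox (a2, a3) (b2, b3)) (\<lambda>y. F (x, y)))"
    by (rule integral_prod_continuous) (rule continuous_on_subset[OF assms], simp)
  also have "\<dots> = integral (cbox a1 b1) (\<lambda>x. integral (cbox a2 b2) (\<lambda>y. integral (cbox a3 b3) (\<lambda>u. F (x, y, u))))"
  proof (rule integral_cong)
    fix x
    have cont_x: "continuous_on UNIV (\<lambda>y. F (x, y))"
      by (rule continuous_on_compose2[OF assms]) (auto intro!: continuous_intros)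
    show "integral (cbox (a2, a3) (b2, b3)) (\<lambda>y. F (x, y)) =
        integral (cbox a2 b2) (\<lambda>y. integral (cbox a3 b3) (\<lambda>u. F (x, y, u)))"
      by (rule integral_prod_continuous) (rule continuous_on_subset[OF cont_x], simp)
  qed
  finally show ?thesis by (simp add: cbox_interval)
qed

text \<open>The fundamental theorem of calculus on each \<open>u\<^sub>3\<close>-line of a box containing \<open>K\<close>, then Fubini.\<close>

lemma integral_eq_by_u3_antiderivative:
  fixes h L R :: "r3 \<Rightarrow> complex"
  assumes K: "compact K" "K \<subseteq> V"
    and cont: "continuous_on UNIV L" "continuous_on UNIV R"
    and supp: "\<And>t. t \<notin> K \<Longrightarrow> h t = 0 \<and> L t = 0 \<and> R t = 0"
    and deriv: "\<And>t. has_dir_deriv h (R t - L t) t (tdir 3)"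
  shows "integral V L = integral V R"
proof -
  obtain r where r: "r > 0" "\<And>t. t \<in> K \<Longrightarrow> norm t \<le> r"
    using compact_imp_bounded[OF K(1)] unfolding bounded_pos by blast
  define B where "B = cbox (- (r + 1), - (r + 1), - (r + 1)) (r + 1, r + 1, r + 1)"
  have coord_le_norm: "\<bar>x\<bar> \<le> norm (x, y, u) \<and> \<bar>y\<bar> \<le> norm (x, y, u) \<and> \<bar>u\<bar> \<le> norm (x, y, u)"
    for x y u :: real
    using norm_fst_le[of x "(y, u)"] norm_fst_le[of y u] norm_snd_le[of u y] norm_snd_le[of "(y, u)" x]
    by simp
  have K_B: "K \<subseteq> B"
  proof
    fix t assume t: "t \<in> K"
    obtain x y u where xyu: "t = (x, y, u)" by (cases t) auto
    have "\<bar>x\<bar> \<le> r + 1" "\<bar>y\<bar> \<le> r + 1" "\<bar>u\<bar> \<le> r + 1"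
      using r(2)[OF t] unfolding xyu by (insert coord_le_norm[of x y u], linarith+)
    then show "t \<in> B"
      unfolding B_def xyu cbox_Pair_iff cbox_interval by (simp add: abs_le_iff)
  qed
  have ends: "(x, y, u) \<notin> K" if "r < \<bar>u\<bar>" for x y u
  proof
    assume "(x, y, u) \<in> K"
    then have "norm (x, y, u) \<le> r" by (rule r(2))
    with coord_le_norm[of x y u] that show False by linarith
  qed
  have to_B: "integral V g = integral B g" if "\<And>t. t \<notin> K \<Longrightarrow> g t = 0" for g :: "r3 \<Rightarrow> complex"
  proof -
    have "(\<lambda>t. if t \<in> V then g t else 0) = (\<lambda>t. if t \<in> B then g t else 0)"
    proof
      fix t
      show "(if t \<in> V then g t else 0) = (if t \<in> B then g t else 0)"
        using that[of t] K(2) K_B by (cases "t \<in> K") auto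
    qed
    then show ?thesis
      using integral_restrict_UNIV[of V g] integral_restrict_UNIV[of B g] by simp
  qed
  have integrable_line: "(\<lambda>u. F (x, y, u)) integrable_on {a..b}"
    if "continuous_on UNIV F" for F :: "r3 \<Rightarrow> complex" and x y a b
  proof -
    have "continuous_on UNIV (\<lambda>u. F (x, y, u))"
      by (rule continuous_on_compose2[OF that]) (auto intro!: continuous_intros)
    then show ?thesis
      by (rule integrable_continuous_interval[OF continuous_on_subset]) simp
  qed
  have line: "integral {-(r + 1)..r + 1} (\<lambda>u. L (x, y, u)) = integral {-(r + 1)..r + 1} (\<lambda>u. R (x, y, u))"
    for x y
  proof -
    have "((\<lambda>u. R (x, y, u) - L (x, y, u)) has_integral (h (x, y, r + 1) - h (x, y, - (r + 1))))
        {-(r + 1)..r + 1}"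
    proof (rule fundamental_theorem_of_calculus)
      show "- (r + 1) \<le> r + 1" using r(1) by simp
      show "((\<lambda>u. h (x, y, u)) has_vector_derivative R (x, y, u) - L (x, y, u)) (at u within {-(r + 1)..r + 1})"
        for u
        using has_vector_derivative_u3[OF deriv] by (rule has_vector_derivative_at_within)
    qed
    moreover have "h (x, y, r + 1) = 0" "h (x, y, - (r + 1)) = 0"
      using supp[OF ends[where u = "r + 1"]] supp[OF ends[where u = "- (r + 1)"]] r(1) by simp_all
    ultimately have "integral {-(r + 1)..r + 1} (\<lambda>u. R (x, y, u) - L (x, y, u)) = 0"
      by (simp add: integral_unique)
    then show ?thesis
      using integral_diff[OF integrable_line[OF cont(2), of x y "- (r + 1)" "r + 1"]
          integrable_line[OF cont(1), of x y "- (r + 1)" "r + 1"]] by simp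
  qed
  have "integral V L = integral B L" "integral V R = integral B R"
    by (rule to_B, use supp in blast)+
  moreover have "integral B L = integral B R"
    unfolding B_def integral_cbox_r3_iterated[OF cont(1)] integral_cbox_r3_iterated[OF cont(2)] line ..
  ultimately show ?thesis by simp
qed

section \<open>The defining function\<close>

definition rho_w1 :: "c2 \<Rightarrow> complex" where
  "rho_w1 w = Complex (Re (fst w)) (-2 * Im (fst w) ^ 3)"

definition rho_w2 :: "c2 \<Rightarrow> complex" where
  "rho_w2 w = cnj (snd w)"

definition levi11 :: "c2 \<Rightarrow> real" where
  "levi11 w = (1 + 6 * Im (fst w)^2) / 2"

lemma dir_deriv_rhoC:
  "dir_deriv rhoC w e = complex_of_real (2 * Re (snd w) * Re (snd e) + 2 * Im (snd w) * Im (snd e)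
     + 2 * Re (fst w) * Re (fst e) + 4 * Im (fst w)^3 * Im (fst e))"
proof -
  have "rho (w + s *\<^sub>R e) = (Re (snd w) + s * Re (snd e))\<^sup>2 + (Im (snd w) + s * Im (snd e))\<^sup>2
     + (Re (fst w) + s * Re (fst e))\<^sup>2 + (Im (fst w) + s * Im (fst e)) ^ 4 - 1" for s
    by (cases w, cases e) (simp add: rho_def cmod_power2)
  then show ?thesis
    unfolding dir_deriv_def rhoC_def
    by (intro vector_derivative_at has_vector_derivative_of_real) (auto intro!: derivative_eq_intros)
qed

lemma dw_rhoC_1: "dw rhoC 1 = rho_w1" "dw rhoC (Suc 0) = rho_w1"
  by (rule ext, simp add: dw_def dir_deriv_rhoC udir_def vdir_def rho_w1_def complex_eq_iff)+

lemma dw_rhoC_2: "dw rhoC 2 = rho_w2"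
  by (rule ext) (simp add: dw_def dir_deriv_rhoC udir_def vdir_def rho_w2_def complex_eq_iff)

lemma dwbar_dw_rhoC:
  assumes "j \<in> {1, 2}" "k \<in> {1, 2}"
  shows "dwbar (dw rhoC j) k w = (if j = k then (if j = 1 then complex_of_real (levi11 w) else 1) else 0)"
proof -
  have "dir_deriv rho_w1 w e = Complex (Re (fst e)) (-6 * Im (fst w)^2 * Im (fst e))" for e
    unfolding dir_deriv_def rho_w1_def
    by (rule vector_derivative_at, cases w, cases e)
      (auto simp: has_vector_derivative_complex_iff intro!: derivative_eq_intros)
  moreover have "dir_deriv rho_w2 w e = cnj (snd e)" for e
    unfolding dir_deriv_def rho_w2_def
    by (rule vector_derivative_at, cases w, cases e)
      (auto simp: has_vector_derivative_complex_iff intro!: derivative_eq_intros)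
  ultimately show ?thesis
    using assms by (auto simp: dw_rhoC_1 dw_rhoC_2 dwbar_def udir_def vdir_def levi11_def complex_eq_iff)
qed

lemma Delta_eq: "Delta w z = rho_w1 w * (fst w - fst z) + rho_w2 w * (snd w - snd z)"
  by (simp add: Delta_def dw_rhoC_1 dw_rhoC_2 coord_def)

lemma rho_frontier_Dom: "w \<in> frontier Dom \<Longrightarrow> rho w = 0"
proof -
  assume w: "w \<in> frontier Dom"
  have Dom_eq: "Dom = {w. rho w < 0}" by (auto simp: Dom_def rho_def)
  have cont: "continuous_on UNIV rho"
    unfolding rho_def[abs_def] by (intro continuous_intros)
  have "open Dom" unfolding Dom_eq by (rule open_Collect_less) (use cont in auto)
  moreover have "closure Dom \<subseteq> {w. rho w \<le> 0}"
    by (rule closure_minimal) (auto simp: Dom_eq intro: closed_Collect_le cont)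
  ultimately show ?thesis
    using w unfolding frontier_def Dom_eq by (force simp: interior_open)
qed

lemma Re_Delta_pos:
  assumes w: "rho w = 0" and z: "z \<in> Dom"
  shows "Re (Delta w z) > 0"
proof -
  obtain x1 y1 u v where w_eq: "w = (Complex x1 y1, Complex u v)"
    by (metis complex.collapse prod.collapse)
  obtain a1 b1 s t where z_eq: "z = (Complex a1 b1, Complex s t)"
    by (metis complex.collapse prod.collapse)
  have "u^2 + v^2 + x1^2 + y1^4 = 1"
    using w by (simp add: w_eq rho_def cmod_power2)
  moreover have "s^2 + t^2 + a1^2 + b1^4 < 1"
    using z by (simp add: z_eq Dom_def cmod_power2)
  moreover have "2 * Re (Delta w z) = (x1 - a1)^2 + (u - s)^2 + (v - t)^2
      + (y1 - b1)^2 * (2 * y1^2 + (y1 + b1)^2)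
      + (u^2 + v^2 + x1^2 + y1^4) - (s^2 + t^2 + a1^2 + b1^4)"
    by (simp add: Delta_eq rho_w1_def rho_w2_def w_eq z_eq) algebra
  moreover have "0 \<le> (x1 - a1)^2 + (u - s)^2 + (v - t)^2 + (y1 - b1)^2 * (2 * y1^2 + (y1 + b1)^2)"
    by (intro add_nonneg_nonneg mult_nonneg_nonneg) auto
  ultimately show ?thesis by linarith
qed

lemma has_dir_deriv_rho:
  fixes g :: "'a::real_normed_vector \<Rightarrow> c2"
  assumes "has_dir_deriv g D t e"
  shows "has_dir_deriv (\<lambda>x. rho (g x)) (2 * Re (rho_w1 (g t) * fst D + rho_w2 (g t) * snd D)) t e"
proof -
  have "has_dir_deriv (\<lambda>x. fst (g x)) (fst D) t e" "has_dir_deriv (\<lambda>x. snd (g x)) (snd D) t e"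
    using assms by (auto intro: has_dir_deriv_bounded_linear bounded_linear_fst bounded_linear_snd)
  then have "has_dir_deriv (\<lambda>x. (Re (snd (g x)))^2 + (Im (snd (g x)))^2 + (Re (fst (g x)))^2
      + (Im (fst (g x)))^4 - 1)
    (Re (snd D) * (of_nat 2 * Re (snd (g t)) ^ (2 - 1)) + Im (snd D) * (of_nat 2 * Im (snd (g t)) ^ (2 - 1))
      + Re (fst D) * (of_nat 2 * Re (fst (g t)) ^ (2 - 1)) + Im (fst D) * (of_nat 4 * Im (fst (g t)) ^ (4 - 1))
      - 0) t e"
    by (intro has_dir_deriv_diff has_dir_deriv_add has_dir_deriv_power has_dir_deriv_Re
        has_dir_deriv_Im has_dir_deriv_const)
  moreover have "(\<lambda>x. rho (g x)) = (\<lambda>x. (Re (snd (g x)))^2 + (Im (snd (g x)))^2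
      + (Re (fst (g x)))^2 + (Im (fst (g x)))^4 - 1)"
    by (simp add: rho_def cmod_power2)
  ultimately show ?thesis
    by (simp add: rho_w1_def rho_w2_def algebra_simps)
qed

section \<open>Linear algebra of the Levi form\<close>

lemma unitary2_columns:
  assumes "unitary2 a b c d"
  shows "cnj a * a + cnj c * c = 1" "cnj b * b + cnj d * d = 1"
    "cnj a * b + cnj c * d = 0" "cnj b * a + cnj d * c = 0"
proof -
  show "cnj a * a + cnj c * c = 1" "cnj b * b + cnj d * d = 1"
    using assms unfolding unitary2_def
    by (metis complex_norm_square mult.commute of_real_1 of_real_add)+
  show ab: "cnj a * b + cnj c * d = 0" using assms unfolding unitary2_def by simp
  show "cnj b * a + cnj d * c = 0" using arg_cong[OF ab, of cnj] by (simp add: mult.commute)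
qed

lemma unitary2_rows:
  assumes "unitary2 a b c d"
  shows "a * cnj a + b * cnj b = 1" "a * cnj c + b * cnj d = 0"
    "c * cnj a + d * cnj b = 0" "c * cnj c + d * cnj d = 1"
    and unitary2_det_nonzero: "a * d - b * c \<noteq> 0"
proof -
  note col = unitary2_columns[OF assms]
  have aa: "a * cnj a + c * cnj c = 1" and bb: "b * cnj b + d * cnj d = 1"
    and ab: "cnj a * b + cnj c * d = 0"
    using col by (simp_all add: mult.commute)
  define D where "D = a * d - b * c"
  have b: "b = - D * cnj c" and d: "d = D * cnj a"
    unfolding D_def using aa ab by algebra+
  have DD: "D * cnj D = 1"
  proof -
    have "b * cnj b + d * cnj d = D * cnj D * (a * cnj a + c * cnj c)"
      by (subst (1 2) b, subst (1 2) d) (simp add: algebra_simps)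
    then show ?thesis using aa bb by simp
  qed
  have cb: "cnj b = - cnj D * c" and cd: "cnj d = cnj D * a"
    using arg_cong[OF b, of cnj] arg_cong[OF d, of cnj] by simp_all
  show "a * cnj a + b * cnj b = 1" using aa DD b cb by algebra
  show "a * cnj c + b * cnj d = 0" using DD b cd by algebra
  show "c * cnj a + d * cnj b = 0" using DD d cb by algebra
  show "c * cnj c + d * cnj d = 1" using aa DD d cd by algebra
  show "a * d - b * c \<noteq> 0" using DD unfolding D_def by auto
qed

text \<open>\<open>X m\<close> are the \<open>u\<^sub>1\<close>-, \<open>v\<^sub>1\<close>-, \<open>u\<^sub>2\<close>-derivatives of \<open>\<zeta> + U\<^sup>*(u\<^sub>1 + iv\<^sub>1, u\<^sub>2 + i\<Phi>)\<close>, where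
  \<open>A, C\<close> are the columns of \<open>U\<^sup>*\<close> and \<open>p\<^sub>a, p\<^sub>b, p\<^sub>c\<close> the partials of \<open>\<Phi>\<close>; \<open>R\<close> is \<open>\<partial>\<rho>\<close> and
  \<open>Hm\<close> the (diagonal) Levi matrix.\<close>

lemma levi_det3_sum_eq:
  fixes X :: "nat \<Rightarrow> nat \<Rightarrow> complex" and R :: "nat \<Rightarrow> complex" and ha hb pa pb pc :: real
    and aA aB cA cB :: complex
  assumes H: "\<And>j k. j \<in> {1,2} \<Longrightarrow> k \<in> {1,2} \<Longrightarrow>
      Hm j k = (if j = k then (if j = 1 then complex_of_real ha else complex_of_real hb) else 0)"
  assumes X: "X 1 1 = aA + \<i> * pa * cA" "X 1 2 = aB + \<i> * pa * cB"
     "X 2 1 = \<i> * aA + \<i> * pb * cA" "X 2 2 = \<i> * aB + \<i> * pb * cB"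
     "X 3 1 = (1 + \<i> * pc) * cA" "X 3 2 = (1 + \<i> * pc) * cB"
  assumes tangent: "\<And>m. m \<in> {1,2,3} \<Longrightarrow> Re (R 1 * X m 1 + R 2 * X m 2) = 0"
  defines "gam \<equiv> R 1 * cA + R 2 * cB"
  defines "aa \<equiv> ha * (cmod aA)\<^sup>2 + hb * (cmod aB)\<^sup>2"
  defines "cc \<equiv> ha * (cmod cA)\<^sup>2 + hb * (cmod cB)\<^sup>2"
  defines "hAC \<equiv> ha * aA * cnj cA + hb * aB * cnj cB"
  shows "(\<Sum>i\<in>{1,2}. \<Sum>j\<in>{1,2}. \<Sum>k\<in>{1,2}. R i * Hm j k *
      det3 (\<lambda>m. X m i) (\<lambda>m. cnj (X m k)) (\<lambda>m. X m j))
    = complex_of_real (-2 * Im gam * ((1 + pc\<^sup>2) * aa + (pa\<^sup>2 + pb\<^sup>2) * cc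
        + 2 * (pb - pa * pc) * Re hAC + 2 * (pa + pb * pc) * Im hAC))"
proof -
  define Am where "Am m = R 1 * X m 1 + R 2 * X m 2" for m
  define hh where "hh a b = ha * X a 1 * cnj (X b 1) + hb * X a 2 * cnj (X b 2)" for a b
  define al where "al = R 1 * aA + R 2 * aB"
  have Re_Am: "Re (Am 1) = 0" "Re (Am 2) = 0" "Re (Am 3) = 0"
    using tangent by (auto simp: Am_def)
  have "(\<Sum>i\<in>{1,2}. \<Sum>j\<in>{1,2}. \<Sum>k\<in>{1,2}. R i * Hm j k *
      det3 (\<lambda>m. X m i) (\<lambda>m. cnj (X m k)) (\<lambda>m. X m j))
     = Am 1 * (cnj (hh 2 3) - hh 2 3) - Am 2 * (cnj (hh 1 3) - hh 1 3) + Am 3 * (cnj (hh 1 2) - hh 1 2)"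
    by (simp add: H Am_def hh_def det3_def algebra_simps)
  also have "\<dots> = complex_of_real (-2 * (Im (Am 1) * Im (cnj (hh 2 3))
      - Im (Am 2) * Im (cnj (hh 1 3)) + Im (Am 3) * Im (cnj (hh 1 2))))"
    using Re_Am by (simp add: complex_eq_iff algebra_simps)
  also have "\<dots> = complex_of_real (-2 * Im gam * ((1 + pc\<^sup>2) * aa + (pa\<^sup>2 + pb\<^sup>2) * cc
        + 2 * (pb - pa * pc) * Re hAC + 2 * (pa + pb * pc) * Im hAC))"
  proof -
    have cc: "cc = ha * (Re cA * Re cA + Im cA * Im cA) + hb * (Re cB * Re cB + Im cB * Im cB)"
      and aa: "aa = ha * (Re aA * Re aA + Im aA * Im aA) + hb * (Re aB * Re aB + Im aB * Im aB)"
      unfolding cc_def aa_def cmod_power2 by (simp_all add: power2_eq_square)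
    note X' = X X[unfolded One_nat_def]
    have h23: "Im (cnj (hh 2 3)) = - (Re hAC + pb * cc + pc * Im hAC)"
      and h13: "Im (cnj (hh 1 3)) = - (Im hAC + pa * cc - pc * Re hAC)"
      and h12: "Im (cnj (hh 1 2)) = aa + pb * Re hAC + pa * Im hAC"
      by (simp_all add: cc aa hh_def X' hAC_def algebra_simps)
    have A1: "Im (Am 1) = Im al + pa * Re gam" "Re (Am 1) = Re al - pa * Im gam"
      and A2: "Im (Am 2) = Re al + pb * Re gam" "Re (Am 2) = - Im al - pb * Im gam"
      and A3: "Im (Am 3) = Im gam + pc * Re gam" "Re (Am 3) = Re gam - pc * Im gam"
      by (simp_all add: Am_def X' al_def gam_def algebra_simps)
    have "Re al = pa * Im gam" "Im al = - pb * Im gam" "Re gam = pc * Im gam"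
      using Re_Am A1(2) A2(2) A3(2) by simp_all
    then show ?thesis
      unfolding h23 h13 h12 A1(1) A2(1) A3(1) by (simp add: algebra_simps power2_eq_square)
  qed
  finally show ?thesis .
qed

text \<open>Multiplied by \<open>1 + p\<^sub>c\<^sup>2\<close>, the quadratic form is the Levi form \<open>h\<^sub>a|W\<^sub>1|\<^sup>2 + h\<^sub>b|W\<^sub>2|\<^sup>2\<close> of the
  vector \<open>W = (1 + p\<^sub>c\<^sup>2) A + k C\<close>, which is nonzero because \<open>A, C\<close> are independent.\<close>

lemma levi_quadratic_pos:
  fixes ha hb pa pb pc :: real and aA aB cA cB :: complex
  assumes h: "ha > 0" "hb > 0" and det: "aA * cB - aB * cA \<noteq> 0"
  defines "aa \<equiv> ha * (cmod aA)\<^sup>2 + hb * (cmod aB)\<^sup>2"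
  defines "cc \<equiv> ha * (cmod cA)\<^sup>2 + hb * (cmod cB)\<^sup>2"
  defines "hAC \<equiv> ha * aA * cnj cA + hb * aB * cnj cB"
  shows "(1 + pc\<^sup>2) * aa + (pa\<^sup>2 + pb\<^sup>2) * cc
        + 2 * (pb - pa * pc) * Re hAC + 2 * (pa + pb * pc) * Im hAC > 0"
proof -
  define k where "k = Complex (pb - pa * pc) (pa + pb * pc)"
  define sP where "sP = 1 + pc\<^sup>2"
  have sP: "sP > 0" unfolding sP_def by (smt (verit) zero_le_power2)
  define W1 where "W1 = complex_of_real sP * aA + k * cA"
  define W2 where "W2 = complex_of_real sP * aB + k * cB"
  have eq: "sP * ((1 + pc\<^sup>2) * aa + (pa\<^sup>2 + pb\<^sup>2) * cc
        + 2 * (pb - pa * pc) * Re hAC + 2 * (pa + pb * pc) * Im hAC) = ha * (cmod W1)\<^sup>2 + hb * (cmod W2)\<^sup>2"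
    unfolding aa_def cc_def hAC_def W1_def W2_def k_def cmod_power2 sP_def
    by (simp add: algebra_simps power2_eq_square)
  have "W1 * cB - W2 * cA = complex_of_real sP * (aA * cB - aB * cA)"
    unfolding W1_def W2_def by (simp add: algebra_simps)
  then have "W1 \<noteq> 0 \<or> W2 \<noteq> 0" using det sP by auto
  then have "ha * (cmod W1)\<^sup>2 + hb * (cmod W2)\<^sup>2 > 0"
    using h by (auto intro: add_pos_nonneg add_nonneg_pos)
  with eq sP show ?thesis by (metis zero_less_mult_pos)
qed

section \<open>The boundary chart\<close>

lemma psi_eq:
  "psi \<zeta> a b c d \<Phi> t =
    (fst \<zeta> + cnj a * Complex (fst t) (fst (snd t)) + cnj c * Complex (snd (snd t)) (\<Phi> t),
     snd \<zeta> + cnj b * Complex (fst t) (fst (snd t)) + cnj d * Complex (snd (snd t)) (\<Phi> t))"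
  by (cases t) (simp add: psi_def loc_inv_def)

lemma has_dir_deriv_psi:
  assumes "has_dir_deriv \<Phi> D\<Phi> t e"
  shows "has_dir_deriv (psi \<zeta> a b c d \<Phi>)
    (loc_inv 0 a b c d (Complex (fst e) (fst (snd e)), Complex (snd (snd e)) D\<Phi>)) t e"
proof -
  have coords: "has_dir_deriv (\<lambda>x. fst x) (fst e) t e" "has_dir_deriv (\<lambda>x. fst (snd x)) (fst (snd e)) t e"
      "has_dir_deriv (\<lambda>x. snd (snd x)) (snd (snd e)) t e"
    by (auto intro!: has_dir_deriv_linear bounded_linear_fst bounded_linear_snd
        bounded_linear_compose[of fst snd, unfolded o_def]
        bounded_linear_compose[of snd snd, unfolded o_def])
  have "has_dir_deriv (\<lambda>x. k0 + k1 * Complex (fst x) (fst (snd x)) + k2 * Complex (snd (snd x)) (\<Phi> x))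
      (0 + k1 * Complex (fst e) (fst (snd e)) + k2 * Complex (snd (snd e)) D\<Phi>) t e" for k0 k1 k2 :: complex
    by (intro has_dir_deriv_add has_dir_deriv_const has_dir_deriv_mult_left has_dir_deriv_Complex coords assms)
  from has_dir_deriv_Pair[OF this[of "fst \<zeta>" "cnj a" "cnj c"] this[of "snd \<zeta>" "cnj b" "cnj d"]]
  show ?thesis
    unfolding psi_eq[abs_def] by (simp add: loc_inv_def)
qed

locale bD_chart =
  fixes \<zeta> :: c2 and a b c d :: complex and \<Phi> :: "r3 \<Rightarrow> real" and V :: "r3 set"
  assumes unitary: "unitary2 a b c d"
    and open_V: "open V"
    and Phi_C2: "Ck_on 2 V \<Phi>"
    and chart_in_bD: "psi \<zeta> a b c d \<Phi> ` V \<subseteq> frontier Dom"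
begin

abbreviation p :: "r3 \<Rightarrow> c2" where "p \<equiv> psi \<zeta> a b c d \<Phi>"

definition dPhi :: "nat \<Rightarrow> r3 \<Rightarrow> real" where
  "dPhi m t = dir_deriv \<Phi> t (tdir m)"

lemma has_dir_deriv_Phi: "m \<in> {1,2,3} \<Longrightarrow> t \<in> V \<Longrightarrow> has_dir_deriv \<Phi> (dPhi m t) t (tdir m)"
  using Phi_C2[unfolded Ck_on_def, rule_format, of "[]"]
  by (auto simp: has_dir_deriv_def dPhi_def)

lemma dir_C1_on_dPhi: "m \<in> {1,2,3} \<Longrightarrow> dir_C1_on (tdir 3) V (dPhi m)"
  using Phi_C2[unfolded Ck_on_def, rule_format, of "[m]"] Phi_C2[unfolded Ck_on_def, rule_format, of "[3,m]"]
  by (auto simp: dir_C1_on_def has_continuous_dir_deriv_def has_dir_deriv_def dPhi_def[abs_def])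

lemma dir_C2_on_Phi: "dir_C2_on (tdir 3) V \<Phi>"
  unfolding dir_C2_on_def has_continuous_dir_deriv_def
proof (intro exI conjI ballI)
  show "continuous_on V \<Phi>"
    using Phi_C2[unfolded Ck_on_def, rule_format, of "[]"] by simp
  show "continuous_on V (dPhi 3)" "dir_C1_on (tdir 3) V (dPhi 3)"
    using dir_C1_on_dPhi[of 3] by (auto intro: dir_C1_on_imp_continuous_on)
  show "has_dir_deriv \<Phi> (dPhi 3 t) t (tdir 3)" if "t \<in> V" for t
    using has_dir_deriv_Phi that by simp
qed

lemma dir_C2_on_psi: "dir_C2_on (tdir 3) V (\<lambda>t. fst (p t))" "dir_C2_on (tdir 3) V (\<lambda>t. snd (p t))"
  unfolding psi_eq fst_conv snd_conv
  by (intro dir_C2_on_add dir_C2_on_mult dir_C2_on_Complex dir_C2_on_const dir_C2_on_Phi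
      dir_C2_on_linear bounded_linear_fst bounded_linear_snd
      bounded_linear_compose[of fst snd, unfolded o_def] bounded_linear_compose[of snd snd, unfolded o_def])+

lemma continuous_on_psi: "continuous_on V p"
proof -
  have "continuous_on V (\<lambda>t. (fst (p t), snd (p t)))"
    using dir_C2_on_psi by (intro continuous_on_Pair dir_C1_on_imp_continuous_on dir_C2_on_imp_dir_C1_on)
  then show ?thesis by simp
qed

lemma dir_C2_on_Delta_psi: "dir_C2_on (tdir 3) V (\<lambda>t. Delta (p t) z)"
  unfolding Delta_eq rho_w1_def rho_w2_def
  by (intro dir_C2_on_add dir_C2_on_mult dir_C2_on_diff dir_C2_on_Complex dir_C2_on_Re dir_C2_on_Im
      dir_C2_on_cnj dir_C2_on_power dir_C2_on_psi dir_C2_on_const)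

definition tangent :: "nat \<Rightarrow> r3 \<Rightarrow> c2" where
  "tangent m t = loc_inv 0 a b c d
     (Complex (fst (tdir m)) (fst (snd (tdir m))), Complex (snd (snd (tdir m))) (dPhi m t))"

lemma has_dir_deriv_psi_tangent: "m \<in> {1,2,3} \<Longrightarrow> t \<in> V \<Longrightarrow> has_dir_deriv p (tangent m t) t (tdir m)"
  unfolding tangent_def by (intro has_dir_deriv_psi has_dir_deriv_Phi)

lemma dpsi_eq_tangent:
  assumes "m \<in> {1,2,3}" "t \<in> V"
  shows "dpsi p j m t = coord j (tangent m t)"
proof -
  have "has_dir_deriv (\<lambda>x. fst (p x)) (fst (tangent m t)) t (tdir m)"
    "has_dir_deriv (\<lambda>x. snd (p x)) (snd (tangent m t)) t (tdir m)"
    using has_dir_deriv_bounded_linear[OF bounded_linear_fst has_dir_deriv_psi_tangent[OF assms]]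
      has_dir_deriv_bounded_linear[OF bounded_linear_snd has_dir_deriv_psi_tangent[OF assms]]
    by simp_all
  then show ?thesis by (simp add: dpsi_def coord_def dir_deriv_eqI)
qed

lemma tangent_eq:
  "tangent 1 t = (cnj a + \<i> * dPhi 1 t * cnj c, cnj b + \<i> * dPhi 1 t * cnj d)"
  "tangent 2 t = (\<i> * cnj a + \<i> * dPhi 2 t * cnj c, \<i> * cnj b + \<i> * dPhi 2 t * cnj d)"
  "tangent 3 t = ((1 + \<i> * dPhi 3 t) * cnj c, (1 + \<i> * dPhi 3 t) * cnj d)"
  by (simp_all add: tangent_def loc_inv_def tdir_def complex_eq_iff)

lemma rho_psi: "t \<in> V \<Longrightarrow> rho (p t) = 0"
  using chart_in_bD rho_frontier_Dom by blast

lemma Re_drho_tangent: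
  assumes "m \<in> {1,2,3}" "t \<in> V"
  shows "Re (rho_w1 (p t) * fst (tangent m t) + rho_w2 (p t) * snd (tangent m t)) = 0"
proof -
  have "has_dir_deriv (\<lambda>x. rho (p x))
      (2 * Re (rho_w1 (p t) * fst (tangent m t) + rho_w2 (p t) * snd (tangent m t))) t (tdir m)"
    using assms by (intro has_dir_deriv_rho has_dir_deriv_psi_tangent)
  moreover have "has_dir_deriv (\<lambda>x. rho (p x)) 0 t (tdir m)"
    by (rule has_dir_deriv_transform_open[OF open_V \<open>t \<in> V\<close> _ has_dir_deriv_const])
      (simp add: rho_psi)
  ultimately show ?thesis by (auto dest: has_dir_deriv_unique)
qed

definition levi_gamma :: "r3 \<Rightarrow> complex" where
  "levi_gamma t = dw rhoC 1 (p t) * cnj c + dw rhoC 2 (p t) * cnj d"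

definition levi_tangent_form :: "r3 \<Rightarrow> real" where
  "levi_tangent_form t = (1 + (dPhi 3 t)\<^sup>2) * (levi11 (p t) * (cmod (cnj a))\<^sup>2 + 1 * (cmod (cnj b))\<^sup>2)
     + ((dPhi 1 t)\<^sup>2 + (dPhi 2 t)\<^sup>2) * (levi11 (p t) * (cmod (cnj c))\<^sup>2 + 1 * (cmod (cnj d))\<^sup>2)
     + 2 * (dPhi 2 t - dPhi 1 t * dPhi 3 t) *
         Re (complex_of_real (levi11 (p t)) * cnj a * cnj (cnj c) + complex_of_real 1 * cnj b * cnj (cnj d))
     + 2 * (dPhi 1 t + dPhi 2 t * dPhi 3 t) *
         Im (complex_of_real (levi11 (p t)) * cnj a * cnj (cnj c) + complex_of_real 1 * cnj b * cnj (cnj d))"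

lemma form_coeff_eq: "t \<in> V \<Longrightarrow> form_coeff p t = complex_of_real (-2 * Im (levi_gamma t) * levi_tangent_form t)"
  unfolding form_coeff_def levi_gamma_def levi_tangent_form_def
proof (rule levi_det3_sum_eq[where ha = "levi11 (p t)" and hb = 1 and aA = "cnj a" and aB = "cnj b"
      and cA = "cnj c" and cB = "cnj d" and pa = "dPhi 1 t" and pb = "dPhi 2 t" and pc = "dPhi 3 t"])
  assume t: "t \<in> V"
  note dpsi = dpsi_eq_tangent[OF _ t] dpsi_eq_tangent[OF _ t, unfolded One_nat_def]
  show "\<And>j k. j \<in> {1,2} \<Longrightarrow> k \<in> {1,2} \<Longrightarrow> dwbar (dw rhoC j) k (p t) =
     (if j = k then (if j = 1 then complex_of_real (levi11 (p t)) else complex_of_real 1) else 0)"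
    by (simp add: dwbar_dw_rhoC)
  show "dpsi p 1 1 t = cnj a + \<i> * complex_of_real (dPhi 1 t) * cnj c"
       "dpsi p 2 1 t = cnj b + \<i> * complex_of_real (dPhi 1 t) * cnj d"
       "dpsi p 1 2 t = \<i> * cnj a + \<i> * complex_of_real (dPhi 2 t) * cnj c"
       "dpsi p 2 2 t = \<i> * cnj b + \<i> * complex_of_real (dPhi 2 t) * cnj d"
       "dpsi p 1 3 t = (1 + \<i> * complex_of_real (dPhi 3 t)) * cnj c"
       "dpsi p 2 3 t = (1 + \<i> * complex_of_real (dPhi 3 t)) * cnj d"
    by (simp_all add: dpsi tangent_eq tangent_eq[unfolded One_nat_def] coord_def)
  show "\<And>m. m \<in> {1,2,3} \<Longrightarrow> Re (dw rhoC 1 (p t) * dpsi p 1 m t + dw rhoC 2 (p t) * dpsi p 2 m t) = 0"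
    using Re_drho_tangent[OF _ t] by (simp add: dpsi dw_rhoC_1 dw_rhoC_2 coord_def)
qed

text \<open>If \<open>Im \<gamma>\<close> vanished, \<open>\<partial>\<rho>\<close> would annihilate the whole complex span of the tangent vectors,
  which is \<open>\<complex>\<^sup>2\<close>; but \<open>\<partial>\<rho> \<noteq> 0\<close> on \<open>bD\<close>.\<close>

lemma Im_levi_gamma_nonzero:
  assumes t: "t \<in> V"
  shows "Im (levi_gamma t) \<noteq> 0"
proof
  assume Im0: "Im (levi_gamma t) = 0"
  define r1 where "r1 = rho_w1 (p t)"
  define r2 where "r2 = rho_w2 (p t)"
  define al where "al = r1 * cnj a + r2 * cnj b"
  define ga where "ga = r1 * cnj c + r2 * cnj d"
  have gamma: "levi_gamma t = ga"
    by (simp add: levi_gamma_def ga_def r1_def r2_def dw_rhoC_1 dw_rhoC_2)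
  have "Re (al + \<i> * dPhi 1 t * ga) = 0" "Re (\<i> * al + \<i> * dPhi 2 t * ga) = 0"
    "Re ((1 + \<i> * dPhi 3 t) * ga) = 0"
    using Re_drho_tangent[OF _ t, of 1] Re_drho_tangent[OF _ t, of 2] Re_drho_tangent[OF _ t, of 3]
    by (simp_all add: tangent_eq tangent_eq[unfolded One_nat_def] al_def ga_def r1_def r2_def algebra_simps)
  with Im0 gamma have "al = 0" "ga = 0" by (simp_all add: complex_eq_iff)
  moreover have "r1 = a * al + c * ga" "r2 = b * al + d * ga"
    using unitary2_columns[OF unitary] unfolding al_def ga_def by algebra+
  ultimately have "r1 = 0" "r2 = 0" by simp_all
  then have "rho (p t) = -1"
    by (simp add: r1_def r2_def rho_w1_def rho_w2_def rho_def complex_eq_iff)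
  with rho_psi[OF t] show False by simp
qed

lemma levi_tangent_form_pos: "levi_tangent_form t > 0"
proof -
  have "levi11 (p t) > 0"
    unfolding levi11_def by (simp add: add_pos_nonneg)
  moreover have "cnj a * cnj d - cnj b * cnj c \<noteq> 0"
    using unitary2_det_nonzero[OF unitary] by (metis complex_cnj_diff complex_cnj_mult complex_cnj_zero_iff)
  ultimately show ?thesis
    unfolding levi_tangent_form_def by (intro levi_quadratic_pos) simp_all
qed

lemma form_coeff_nonzero: "t \<in> V \<Longrightarrow> form_coeff p t \<noteq> 0"
  using form_coeff_eq Im_levi_gamma_nonzero levi_tangent_form_pos[of t] by simp

lemma dir_C1_on_Lam: "dir_C1_on (tdir 3) V (Lam p)"
proof -
  have "dir_C1_on (tdir 3) V (\<lambda>t. complex_of_real (-2 * Im (levi_gamma t) * levi_tangent_form t))"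
    unfolding levi_gamma_def levi_tangent_form_def dw_rhoC_1 dw_rhoC_2 rho_w1_def rho_w2_def levi11_def
    by (intro dir_C1_on_of_real dir_C1_on_mult dir_C1_on_add dir_C1_on_diff dir_C1_on_Im dir_C1_on_Re
        dir_C1_on_power dir_C1_on_divide dir_C1_on_Complex dir_C1_on_cnj dir_C1_on_const dir_C1_on_dPhi
        dir_C2_on_imp_dir_C1_on[OF dir_C2_on_psi(1)] dir_C2_on_imp_dir_C1_on[OF dir_C2_on_psi(2)]) auto
  then have "dir_C1_on (tdir 3) V (form_coeff p)"
    by (rule dir_C1_on_transform_open[OF open_V, rotated]) (simp add: form_coeff_eq)
  then have "dir_C1_on (tdir 3) V (\<lambda>t. cmod (form_coeff p t / (2 * complex_of_real pi * \<i>)\<^sup>2))"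
    by (intro dir_C1_on_norm dir_C1_on_divide dir_C1_on_const) (auto simp: form_coeff_nonzero)
  then show ?thesis unfolding Lam_def[abs_def] by simp
qed

definition chart_inv :: "c2 \<Rightarrow> r3" where
  "chart_inv w = (Re (a * (fst w - fst \<zeta>) + b * (snd w - snd \<zeta>)),
     Im (a * (fst w - fst \<zeta>) + b * (snd w - snd \<zeta>)), Re (c * (fst w - fst \<zeta>) + d * (snd w - snd \<zeta>)))"

lemma chart_inv_psi: "chart_inv (p t) = t"
proof -
  obtain u1 v1 u2 where t: "t = (u1, v1, u2)" by (cases t) auto
  have "a * (fst (p t) - fst \<zeta>) + b * (snd (p t) - snd \<zeta>)
      = (a * cnj a + b * cnj b) * Complex u1 v1 + (a * cnj c + b * cnj d) * Complex u2 (\<Phi> t)"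
    "c * (fst (p t) - fst \<zeta>) + d * (snd (p t) - snd \<zeta>)
      = (c * cnj a + d * cnj b) * Complex u1 v1 + (c * cnj c + d * cnj d) * Complex u2 (\<Phi> t)"
    unfolding psi_eq t by (simp_all add: algebra_simps)
  then show ?thesis
    by (simp add: chart_inv_def unitary2_rows[OF unitary] t)
qed

lemma compact_psi_preimage:
  assumes "compact S" "S \<subseteq> p ` V"
  shows "compact {t \<in> V. p t \<in> S}"
proof -
  have "{t \<in> V. p t \<in> S} = chart_inv ` S"
  proof
    show "{t \<in> V. p t \<in> S} \<subseteq> chart_inv ` S"
      using chart_inv_psi by (metis (mono_tags, lifting) image_eqI mem_Collect_eq subsetI)
    show "chart_inv ` S \<subseteq> {t \<in> V. p t \<in> S}"
      using assms(2) by (auto simp: chart_inv_psi)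
  qed
  moreover have "continuous_on S chart_inv"
    unfolding chart_inv_def[abs_def] by (intro continuous_intros)
  ultimately show ?thesis
    using compact_continuous_image assms(1) by metis
qed

lemma compact_support_preimage:
  fixes f :: "c2 \<Rightarrow> 'b::zero"
  assumes "closure {w \<in> frontier Dom. f w \<noteq> 0} \<subseteq> B" "bounded B" "frontier Dom \<inter> B \<subseteq> p ` V"
  shows "compact {t \<in> V. p t \<in> closure {w \<in> frontier Dom. f w \<noteq> 0}}"
proof (rule compact_psi_preimage)
  have "closure {w \<in> frontier Dom. f w \<noteq> 0} \<subseteq> frontier Dom"
    by (rule closure_minimal[OF _ frontier_closed]) blast
  with assms(1,3) show "closure {w \<in> frontier Dom. f w \<noteq> 0} \<subseteq> p ` V" by blast
  show "compact (closure {w \<in> frontier Dom. f w \<noteq> 0})"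
    using assms(1,2) by (simp add: compact_eq_bounded_closed bounded_subset)
qed

lemma cauchy_leray_chart_by_parts:
  fixes f :: "c2 \<Rightarrow> complex" and z :: c2 and N K :: "r3 set"
  assumes N: "open N" "N \<subseteq> V" and K: "compact K" "K \<subseteq> N"
    and f_vanish: "\<And>t. t \<in> V \<Longrightarrow> t \<notin> K \<Longrightarrow> f (p t) = 0"
    and f_C1: "dir_C1_on (tdir 3) V (\<lambda>t. f (p t))"
    and dDelta: "\<And>t. t \<in> N \<Longrightarrow> dDelta_du2 p t z \<noteq> 0"
    and z: "z \<in> Dom"
  shows "cauchy_leray_chart p V f z =
    integral V (\<lambda>t. (1 / Delta (p t) z) *
      dir_deriv (\<lambda>t. f (p t) * (complex_of_real (Lam p t) / dDelta_du2 p t z)) t (tdir 3))"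
proof -
  define Dl where "Dl t = Delta (p t) z" for t
  define G where "G t = f (p t) * (complex_of_real (Lam p t) / dDelta_du2 p t z)" for t
  define G' where "G' t = dir_deriv G t (tdir 3)" for t
  define L where "L t = (if t \<in> N then f (p t) * complex_of_real (Lam p t) / (Dl t)\<^sup>2 else 0)" for t
  define R where "R t = (if t \<in> N then G' t / Dl t else 0)" for t
  define h where "h t = (if t \<in> N then G t / Dl t else 0)" for t
  have Dl_nonzero: "Dl t \<noteq> 0" if "t \<in> V" for t
    using Re_Delta_pos[OF rho_psi[OF that] z] by (auto simp: Dl_def)
  have Dl: "has_continuous_dir_deriv (tdir 3) V Dl (\<lambda>t. dDelta_du2 p t z)"
    using dir_C1_on_dir_deriv[OF dir_C2_on_imp_dir_C1_on[OF dir_C2_on_Delta_psi]]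
    by (simp add: Dl_def[abs_def] dDelta_du2_def)
  have "dir_C1_on (tdir 3) N (\<lambda>t. dDelta_du2 p t z)"
    using dir_C1_on_subset[OF dir_C2_on_imp_dir_C1_on_dir_deriv[OF dir_C2_on_Delta_psi open_V] N(2)]
    by (simp add: dDelta_du2_def)
  then have "dir_C1_on (tdir 3) N G"
    unfolding G_def using dDelta
    by (intro dir_C1_on_mult dir_C1_on_divide dir_C1_on_of_real dir_C1_on_subset[OF f_C1 N(2)]
        dir_C1_on_subset[OF dir_C1_on_Lam N(2)])
  then have G: "has_continuous_dir_deriv (tdir 3) N G G'"
    unfolding G'_def by (rule dir_C1_on_dir_deriv)
  have open_V_K: "open (V - K)"
    using open_V K(1) by (simp add: open_Diff compact_imp_closed)
  have G'_vanish: "G' t = 0" if "t \<in> V" "t \<notin> K" for t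
  proof -
    have "has_dir_deriv G 0 t (tdir 3)"
      by (rule has_dir_deriv_transform_open[OF open_V_K _ _ has_dir_deriv_const])
        (use that f_vanish in \<open>auto simp: G_def\<close>)
    then show ?thesis by (simp add: G'_def dir_deriv_eqI)
  qed
  have supp: "h t = 0 \<and> L t = 0 \<and> R t = 0" if "t \<notin> K" for t
  proof (cases "t \<in> N")
    case True
    then have "t \<in> V" using N(2) by blast
    then show ?thesis
      using f_vanish[OF _ that] G'_vanish[OF _ that] by (simp add: h_def L_def R_def G_def)
  qed (simp add: h_def L_def R_def)
  have cont: "continuous_on UNIV L" "continuous_on UNIV R"
  proof -
    have "continuous_on N (\<lambda>t. f (p t) * complex_of_real (Lam p t) / (Dl t)\<^sup>2)"
      "continuous_on N (\<lambda>t. G' t / Dl t)"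
      using dir_C1_on_imp_continuous_on[OF f_C1] dir_C1_on_imp_continuous_on[OF dir_C1_on_Lam] G Dl
        Dl_nonzero N(2)
      by (auto simp: has_continuous_dir_deriv_def intro!: continuous_intros intro: continuous_on_subset)
    then have "continuous_on N L" "continuous_on N R"
      by (auto simp: L_def R_def elim!: continuous_on_eq)
    then show "continuous_on UNIV L" "continuous_on UNIV R"
      using supp by (auto intro: continuous_on_vanishing_outside_closed[OF N(1) K(2) compact_imp_closed[OF K(1)]])
  qed
  have deriv: "has_dir_deriv h (R t - L t) t (tdir 3)" for t
  proof (cases "t \<in> N")
    case True
    then have t: "t \<in> V" using N(2) by blast
    have "has_dir_deriv (\<lambda>x. G x * inverse (Dl x))
        (G t * (dDelta_du2 p t z * - (inverse (Dl t))\<^sup>2) + G' t * inverse (Dl t)) t (tdir 3)"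
      using G Dl True t Dl_nonzero[OF t]
      by (intro has_dir_deriv_mult has_dir_deriv_inverse) (auto simp: has_continuous_dir_deriv_def)
    moreover have "G t * (dDelta_du2 p t z * - (inverse (Dl t))\<^sup>2) + G' t * inverse (Dl t) = R t - L t"
      using True dDelta[OF True] Dl_nonzero[OF t]
      by (simp add: G_def R_def L_def field_simps power2_eq_square)
    ultimately show ?thesis
      using True N(1) by (auto simp: h_def divide_inverse intro: has_dir_deriv_transform_open)
  next
    case False
    then have "t \<notin> K" using K(2) by blast
    moreover have "has_dir_deriv h 0 t (tdir 3)"
      by (rule has_dir_deriv_transform_open[of "- K" t "\<lambda>_. 0"])
        (use K(1) supp \<open>t \<notin> K\<close> in \<open>auto simp: compact_imp_closed open_Compl has_dir_deriv_const\<close>)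
    ultimately show ?thesis using supp by simp
  qed
  have "cauchy_leray_chart p V f z = integral V L"
    unfolding cauchy_leray_chart_def
    by (rule integral_cong) (use K(2) f_vanish in \<open>auto simp: L_def Dl_def\<close>)
  also have "\<dots> = integral V R"
    using integral_eq_by_u3_antiderivative[OF K(1) _ cont supp deriv] K(2) N(2) by blast
  also have "\<dots> = integral V (\<lambda>t. (1 / Delta (p t) z) * G' t)"
    by (rule integral_cong) (use K(2) G'_vanish in \<open>auto simp: R_def Dl_def\<close>)
  finally show ?thesis by (simp add: G'_def G_def[abs_def])
qed

end

theorem corollary2p3:
  fixes \<zeta> :: c2 and a b c d :: complex and \<Phi> :: "r3 \<Rightarrow> real"
    and V :: "r3 set" and W :: "c2 set" and \<delta> :: real
    and f :: "c2 \<Rightarrow> complex" and z :: c2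
  assumes zeta_bd: "\<zeta> \<in> frontier Dom"
    and unitary: "unitary2 a b c d"
    and coords: "dir_deriv (\<lambda>w'. rho (loc_inv \<zeta> a b c d w')) 0 (udir 1) = 0"
                "dir_deriv (\<lambda>w'. rho (loc_inv \<zeta> a b c d w')) 0 (vdir 1) = 0"
                "dir_deriv (\<lambda>w'. rho (loc_inv \<zeta> a b c d w')) 0 (udir 2) = 0"
                "dir_deriv (\<lambda>w'. rho (loc_inv \<zeta> a b c d w')) 0 (vdir 2) = grad_norm \<zeta>"
    and chart: "open V" "smooth_on V \<Phi>" "open W" "\<zeta> \<in> W"
               "frontier Dom \<inter> W = psi \<zeta> a b c d \<Phi> ` V"
    and delta: "\<delta> > 0" "ball \<zeta> \<delta> \<subseteq> W"
               "\<forall>t\<in>V. \<forall>z'\<in>ball \<zeta> \<delta>. psi \<zeta> a b c d \<Phi> t \<in> ball \<zeta> \<delta> \<longrightarrow>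
                   dDelta_du2 (psi \<zeta> a b c d \<Phi>) t z' \<noteq> 0"
    and f_C1: "Ck_on 1 V (\<lambda>t. f (psi \<zeta> a b c d \<Phi> t))"
    and f_supp: "closure {w \<in> frontier Dom. f w \<noteq> 0} \<subseteq> ball \<zeta> \<delta>"
    and z: "z \<in> Dom" "z \<in> ball \<zeta> \<delta>"
  shows "cauchy_leray_chart (psi \<zeta> a b c d \<Phi>) V f z =
    integral V (\<lambda>t. (1 / Delta (psi \<zeta> a b c d \<Phi> t) z) *
      dir_deriv (\<lambda>t. f (psi \<zeta> a b c d \<Phi> t) *
          (complex_of_real (Lam (psi \<zeta> a b c d \<Phi>) t) / dDelta_du2 (psi \<zeta> a b c d \<Phi>) t z))
        t (tdir 3))"
proof -
  interpret bD_chart \<zeta> a b c d \<Phi> V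
  proof
    show "Ck_on 2 V \<Phi>" using chart(2) by (simp add: smooth_on_def)
    show "psi \<zeta> a b c d \<Phi> ` V \<subseteq> frontier Dom" using chart(5) by blast
  qed (fact unitary chart(1))+
  define S where "S = closure {w \<in> frontier Dom. f w \<noteq> 0}"
  have K: "compact {t \<in> V. p t \<in> S}"
    unfolding S_def using f_supp delta(2) chart(5) by (intro compact_support_preimage) auto
  show ?thesis
  proof (rule cauchy_leray_chart_by_parts[where N = "V \<inter> p -` ball \<zeta> \<delta>" and K = "{t \<in> V. p t \<in> S}"])
    show "open (V \<inter> p -` ball \<zeta> \<delta>)"
      using continuous_open_preimage[OF continuous_on_psi open_V open_ball] .
    show "{t \<in> V. p t \<in> S} \<subseteq> V \<inter> p -` ball \<zeta> \<delta>"
      using f_supp unfolding S_def by blast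
    show "f (p t) = 0" if "t \<in> V" "t \<notin> {t \<in> V. p t \<in> S}" for t
      using that chart_in_bD closure_subset[of "{w \<in> frontier Dom. f w \<noteq> 0}"]
      unfolding S_def by (auto simp: image_subset_iff)
    show "dir_C1_on (tdir 3) V (\<lambda>t. f (p t))"
      using Ck_on_1_imp_dir_C1_on[OF f_C1, of 3] by simp
    show "dDelta_du2 p t z \<noteq> 0" if "t \<in> V \<inter> p -` ball \<zeta> \<delta>" for t
      using that delta(3) z(2) by blast
  qed (use K z(1) in auto)
qed

end
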